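(* Let $q$ be even. The unipotent conjugacy classes of type $(2,1)$ in $\mathbf{SL}_3(q)$ are not of type F.
   Context: Type $(2,1)$: Jordan blocks of sizes 2 and 1. Conjugacy classes are racks with $x\triangleright y=xyx^{-1}$. A rack is of type F if it has pairwise disjoint subracks $R_1,\dots,R_4$ and elements $r_a\in R_a$ with $R_a\triangleright R_b=R_b$ and $r_a\triangleright r_b\neq r_b$ for all $a\neq b$. *)

theory Defs
  imports "HOL-Analysis.Analysis" "HOL-Library.Numeral_Type"
begin

definition is_subrack :: "'a set \<Rightarrow> ('a \<Rightarrow> 'a \<Rightarrow> 'a) \<Rightarrow> 'a set \<Rightarrow> bool" where
  "is_subrack X op R \<longleftrightarrow> R \<subseteq> X \<and> (\<forall>x\<in>R. \<forall>y\<in>R. op x y \<in> R)"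

definition rack_type_F :: "'a set \<Rightarrow> ('a \<Rightarrow> 'a \<Rightarrow> 'a) \<Rightarrow> bool" where
  "rack_type_F X op \<longleftrightarrow>
     (\<exists>(R :: nat \<Rightarrow> 'a set) (r :: nat \<Rightarrow> 'a).
        (\<forall>a<4. is_subrack X op (R a) \<and> r a \<in> R a) \<and>
        (\<forall>a<4. \<forall>b<4. a \<noteq> b \<longrightarrow>
            R a \<inter> R b = {} \<and>
            {op x y | x y. x \<in> R a \<and> y \<in> R b} = R b \<and>
            op (r a) (r b) \<noteq> r b))"

definition conj_op :: "'a::field^'n^'n \<Rightarrow> 'a^'n^'n \<Rightarrow> 'a^'n^'n" where
  "conj_op x y = x ** y ** matrix_inv x"

definition SL_conj_class :: "'a::field^'n^'n \<Rightarrow> ('a^'n^'n) set" where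
  "SL_conj_class u = {g ** u ** matrix_inv g | g. det g = 1}"

text \<open>Unipotent of Jordan type (2,1) in dimension 3: u \<noteq> 1 and (u - 1)^2 = 0.\<close>
definition unipotent_type21 :: "'a::field^3^3 \<Rightarrow> bool" where
  "unipotent_type21 u \<longleftrightarrow> u \<noteq> mat 1 \<and> (u - mat 1) ** (u - mat 1) = 0"

end

theory Submission
  imports Defs
begin

(* In characteristic 2 the class consists of transvections 1 + v p^T with p v = 0, since
   u - 1 squares to zero and therefore has rank one. Let x = 1 + v p^T and y = 1 + w q^T lie in
   disjoint subracks, with x acting on the subrack of y. If (p w)(q v) were nonzero, then xy
   would have odd order: squaring is injective on the commutative algebra spanned by 1, xy - 1
   and v p^T w q^T + w q^T v p^T, so (xy)^(2^n) = xy for some n > 0. Conjugating y alternately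
   by y and by x then reaches (xy)^(2^n) y = x, putting x into the subrack of y.
   So for type F witnesses r_a = 1 + v_a p_a^T exactly one of p_a v_b and p_b v_a is nonzero
   when a <> b, and a short computation excludes directed 3-cycles. The resulting tournament on
   four vertices has a walk a -> b -> c -> d. This makes p_a, p_b, p_c triangular against
   v_b, v_c, v_d and hence linearly independent. But all three annihilate v_a <> 0, which is
   impossible in dimension 3. *)

section \<open>Fields of characteristic two\<close>

lemma even_card_imp_two_eq_zero:
  assumes "even CARD('a::{field,finite})"
  shows "(2::'a) = 0"
proof -
  let ?U = "UNIV - {0::'a}"
  have "(-1) ^ card ?U * (\<Prod>y\<in>?U. y) = (\<Prod>y\<in>?U. (-1) * y)"
    by (simp only: prod.distrib prod_constant)
  also have "\<dots> = (\<Prod>y\<in>?U. - y)"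
    by simp
  also have "\<dots> = (\<Prod>y\<in>?U. y)"
    by (rule prod.reindex_bij_witness[of _ uminus uminus]) auto
  finally have "(-1::'a) ^ card ?U = 1"
    by simp
  moreover have "odd (card ?U)"
    using assms finite_UNIV_card_ge_0[where 'a='a] by (simp add: card_Diff_singleton)
  ultimately have "(-1::'a) = 1"
    by simp
  then show ?thesis
    by (metis add.right_inverse one_add_one)
qed

lemma char_two_add_eq_0_iff:
  fixes x y :: "'a::ring_1"
  assumes "(2::'a) = 0"
  shows "x + y = 0 \<longleftrightarrow> x = y"
  using assms by (metis add_eq_0_iff mult_2 mult_zero_left)

lemma char_two_power2_inj:
  fixes x y :: "'a::field"
  assumes "(2::'a) = 0" and "x\<^sup>2 = y\<^sup>2"
  shows "x = y"
proof -
  have "(x - y)\<^sup>2 = x\<^sup>2 - y\<^sup>2 - 2 * (x * y - y\<^sup>2)"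
    by (simp add: power2_eq_square algebra_simps)
  then show ?thesis
    using assms by simp
qed

section \<open>Matrices, pairings and transvections\<close>

lemma matrix_add_rdistrib: "(A + B) ** C = A ** C + B ** (C::'a::semiring_1^'n^'m)"
  by (simp add: vec_eq_iff matrix_matrix_mult_def sum.distrib distrib_right)

lemma mat_matrix_vector_mult: "mat c *v x = c *s (x::'a::comm_semiring_1^'n)"
  by (simp add: vec_eq_iff matrix_vector_mult_def mat_def if_distrib if_distribR
      cong del: if_weak_cong)

lemma vector_matrix_mult_mat: "x v* mat c = c *s (x::'a::comm_semiring_1^'n)"
  by (simp add: vec_eq_iff vector_matrix_mult_def mat_def if_distrib if_distribR
      cong del: if_weak_cong) (simp add: mult.commute)

lemma mat_mult_mat: "mat c ** mat d = (mat (c * d) :: 'a::comm_semiring_1^'n^'n)"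
  by (simp add: matrix_eq mat_matrix_vector_mult vector_smult_assoc flip: matrix_vector_mul_assoc)

lemma matrix_inv_eq:
  fixes A B :: "'a::field^'n^'n"
  assumes "A ** B = mat 1"
  shows "matrix_inv A = B"
proof -
  have BA: "B ** A = mat 1"
    using assms matrix_left_right_inverse by blast
  have inv: "A ** matrix_inv A = mat 1 \<and> matrix_inv A ** A = mat 1"
    unfolding matrix_inv_def by (rule someI[of _ B]) (use assms BA in blast)
  have "matrix_inv A = (B ** A) ** matrix_inv A"
    using BA by simp
  also have "\<dots> = B"
    using inv by (simp flip: matrix_mul_assoc)
  finally show ?thesis .
qed

lemma invertible_matrix_inv:
  fixes A :: "'a::field^'n^'n"
  assumes "invertible A"
  shows "A ** matrix_inv A = mat 1" "matrix_inv A ** A = mat 1"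
  using assms matrix_inv_eq unfolding invertible_def by metis+

definition dot :: "'a::semiring_1^'n \<Rightarrow> 'a^'n \<Rightarrow> 'a" where
  "dot x y = (\<Sum>i\<in>UNIV. x$i * y$i)"

lemma dot_zero_left [simp]: "dot 0 x = 0"
  by (simp add: dot_def)

lemma dot_add_left: "dot (x + y) z = dot x z + dot y (z::'a::comm_semiring_1^'n)"
  by (simp add: dot_def distrib_right sum.distrib)

lemma dot_scale_left: "dot (c *s x) y = c * dot x (y::'a::comm_semiring_1^'n)"
  by (simp add: dot_def sum_distrib_left mult.assoc)

lemma dot_add_right: "dot x (y + z) = dot x y + dot x (z::'a::comm_semiring_1^'n)"
  by (simp add: dot_def distrib_left sum.distrib)

lemma dot_scale_right: "dot x (c *s y) = c * dot x (y::'a::comm_semiring_1^'n)"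
  by (simp add: dot_def sum_distrib_left ac_simps)

lemma dot_vector_matrix_mult: "dot (x v* A) y = dot x (A *v (y::'a::comm_semiring_1^'n))"
  by (simp add: dot_def vector_matrix_mult_def matrix_vector_mult_def sum_distrib_left
      sum_distrib_right ac_simps) (rule sum.swap)

definition outer :: "'a::semiring_1^'n \<Rightarrow> 'a^'m \<Rightarrow> 'a^'m^'n" where
  "outer v p = (\<chi> i j. v$i * p$j)"

lemma outer_component [simp]: "outer v p $ i $ j = v$i * p$j"
  by (simp add: outer_def)

lemma outer_add_right: "outer v p + outer v p' = outer v (p + p')"
  by (simp add: vec_eq_iff distrib_left)

lemma outer_zero_right [simp]: "outer v 0 = 0"
  by (simp add: vec_eq_iff)

lemma matrix_mult_outer: "(A::'a::comm_semiring_1^'n^'m) ** outer v p = outer (A *v v) p"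
  by (simp add: vec_eq_iff matrix_matrix_mult_def matrix_vector_mult_def sum_distrib_right
      mult.assoc)

lemma outer_mult_matrix: "outer v p ** (A::'a::comm_semiring_1^'n^'m) = outer v (p v* A)"
  by (simp add: vec_eq_iff matrix_matrix_mult_def vector_matrix_mult_def sum_distrib_left ac_simps)

lemma outer_matrix_vector_mult: "outer v p *v x = dot p x *s (v::'a::comm_semiring_1^'n)"
  by (simp add: vec_eq_iff matrix_vector_mult_def dot_def sum_distrib_left ac_simps)

lemma vector_matrix_mult_outer: "x v* outer v p = dot x v *s (p::'a::comm_semiring_1^'n)"
  by (auto simp: vec_eq_iff vector_matrix_mult_def dot_def sum_distrib_left ac_simps
      intro!: sum.cong)

lemma outer_mult_outer:
  "outer v p ** outer w q = outer v (dot p w *s (q::'a::comm_semiring_1^'n))"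
  by (simp add: outer_mult_matrix vector_matrix_mult_outer)

definition transvection :: "'a::semiring_1^'n \<Rightarrow> 'a^'n \<Rightarrow> 'a^'n^'n" where
  "transvection v p = mat 1 + outer v p"

lemma transvection_zero [simp]: "transvection v 0 = mat 1"
  by (simp add: transvection_def)

lemma transvection_mult_same:
  fixes v p p' :: "'a::comm_ring_1^'n"
  assumes "dot p v = 0"
  shows "transvection v p ** transvection v p' = transvection v (p + p')"
  using assms
  by (simp add: transvection_def matrix_add_ldistrib matrix_add_rdistrib outer_mult_outer
      outer_add_right[symmetric] add.assoc add.commute)

lemma matrix_inv_transvection:
  fixes v p :: "'a::field^'n"
  assumes "dot p v = 0"
  shows "matrix_inv (transvection v p) = transvection v (- p)"
  using assms by (simp add: matrix_inv_eq transvection_mult_same)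

lemma invertible_transvection:
  fixes v p :: "'a::field^'n"
  assumes "dot p v = 0"
  shows "invertible (transvection v p)"
  using assms transvection_mult_same[of p v "- p"] unfolding invertible_right_inverse by auto

lemma transvection_involution:
  fixes v p :: "'a::field^'n"
  assumes two: "(2::'a) = 0" and "dot p v = 0"
  shows "transvection v p ** transvection v p = mat 1"
proof -
  have "p + p = 0"
    using two by (simp add: vec_eq_iff flip: mult_2)
  then show ?thesis
    using assms(2) by (simp add: transvection_mult_same)
qed

lemma conj_op_transvection:
  fixes g :: "'a::field^'n^'n"
  assumes "invertible g"
  shows "conj_op g (transvection w q) = transvection (g *v w) (q v* matrix_inv g)"
  using invertible_matrix_inv[OF assms]
  by (simp add: conj_op_def transvection_def matrix_add_ldistrib matrix_add_rdistrib
      matrix_mult_outer outer_mult_matrix flip: matrix_mul_assoc)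

lemma dot_conj:
  fixes g :: "'a::field^'n^'n"
  assumes "invertible g"
  shows "dot (q v* matrix_inv g) (g *v w) = dot q w"
  using invertible_matrix_inv[OF assms]
  by (simp add: dot_vector_matrix_mult matrix_vector_mul_assoc)

lemma conj_op_transvection_transvection:
  fixes v p w q :: "'a::field^'n"
  assumes "dot p v = 0"
  shows "conj_op (transvection v p) (transvection w q)
           = transvection (w + dot p w *s v) (q - dot q v *s p)"
  using assms
  by (simp add: conj_op_transvection invertible_transvection matrix_inv_transvection)
     (simp add: transvection_def matrix_vector_mult_add_rdistrib vector_matrix_mult_add_rdistrib
      outer_matrix_vector_mult vector_matrix_mult_outer)

section \<open>The conjugacy class consists of transvections\<close>

lemma char_two_square_zero_3x3_minors:
  fixes a b c d e f g h i :: "'a::field"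
  assumes two: "(2::'a) = 0"
    and q11: "a*a + b*d + c*g = 0" and q12: "a*b + b*e + c*h = 0" and q13: "a*c + b*f + c*i = 0"
    and q21: "d*a + e*d + f*g = 0" and q22: "d*b + e*e + f*h = 0" and q23: "d*c + e*f + f*i = 0"
    and q31: "g*a + h*d + i*g = 0" and q32: "g*b + h*e + i*h = 0" and q33: "g*c + h*f + i*i = 0"
    and det: "a*(e*i - f*h) - b*(d*i - f*g) + c*(d*h - e*g) = 0"
  shows "a*e = b*d \<and> a*f = c*d \<and> b*f = c*e \<and> a*h = b*g \<and> a*i = c*g \<and> b*i = c*h \<and>
         d*h = e*g \<and> d*i = f*g \<and> e*i = f*h"
proof -
  \<comment> \<open>In characteristic 2 the square of the trace is the trace of the square.\<close>
  have "(a + e + i)\<^sup>2 = 2 * (a*e + a*i + e*i - b*d - c*g - f*h)"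
    using q11 q22 q33 by algebra
  then have tr: "a + e + i = 0"
    using two by simp
  have off: "d*i = f*g" "d*h = e*g" "b*i = c*h" "a*h = b*g" "b*f = c*e" "a*f = c*d"
    using q21 q31 q12 q32 q13 q23 tr by algebra+
  have "(a*e - b*d) + (e*i - f*h) = 0" "(a*i - c*g) + (e*i - f*h) = 0"
    using q22 q33 tr by algebra+
  then have principal: "a*e - b*d = e*i - f*h" "a*i - c*g = e*i - f*h"
    by (simp_all add: char_two_add_eq_0_iff[OF two])
  have "e * (e*i - f*h) = 0" "f * (e*i - f*h) = 0"
    using det off principal by algebra+
  then have "(e*i - f*h)\<^sup>2 = 0"
    by algebra
  then show ?thesis
    using off principal by auto
qed

lemma char_two_square_zero_minors:
  fixes N :: "'a::field^3^3"
  assumes two: "(2::'a) = 0" and NN: "N ** N = 0"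
  shows "N$i$j * N$k$l = N$i$l * N$k$j"
proof -
  have "det N * det N = det (N ** N)"
    by (simp add: det_mul)
  then have "det N = 0"
    using NN by (simp add: det_3)
  then have "\<forall>i j k l. N$i$j * N$k$l = N$i$l * N$k$j"
    using char_two_square_zero_3x3_minors[OF two, where a="N$1$1" and b="N$1$2" and c="N$1$3"
        and d="N$2$1" and e="N$2$2" and f="N$2$3" and g="N$3$1" and h="N$3$2" and i="N$3$3"] NN
    unfolding forall_3
    by (simp add: vec_eq_iff forall_3 matrix_matrix_mult_def sum_3 det_3 algebra_simps)
  then show ?thesis
    by blast
qed

lemma char_two_square_zero_eq_outer:
  fixes N :: "'a::field^3^3"
  assumes two: "(2::'a) = 0" and NN: "N ** N = 0" and "N \<noteq> 0"
  obtains v p where "N = outer v p" "dot p v = 0" "v \<noteq> 0"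
proof -
  obtain k l where kl: "N$k$l \<noteq> 0"
    using \<open>N \<noteq> 0\<close> by (metis vec_eq_iff zero_index)
  define v where "v = (\<chi> i. N$i$l)"
  define p where "p = (\<chi> j. N$k$j / N$k$l)"
  have N: "N = outer v p"
    using kl char_two_square_zero_minors[OF two NN, of _ l k]
    by (auto simp: vec_eq_iff v_def p_def field_simps)
  have "outer v (dot p v *s p) = 0"
    using NN by (simp add: N outer_mult_outer)
  then have "v$k * (dot p v * p$l) = 0"
    by (metis outer_component vector_smult_component zero_index)
  then have "dot p v = 0"
    using kl by (simp add: v_def p_def)
  moreover have "v \<noteq> 0"
    using kl by (auto simp: v_def vec_eq_iff)
  ultimately show thesis
    using N that by blast
qed

lemma SL_conj_class_transvection:
  fixes u :: "'a::field^3^3"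
  assumes two: "(2::'a) = 0" and u: "unipotent_type21 u" and z: "z \<in> SL_conj_class u"
  obtains v p where "z = transvection v p" "dot p v = 0" "v \<noteq> 0"
proof -
  obtain g where zg: "z = conj_op g u" and "det g = 1"
    using z by (auto simp: SL_conj_class_def conj_op_def)
  then have g: "invertible g"
    by (simp add: invertible_det_nz)
  obtain v p where "u - mat 1 = outer v p" and pv: "dot p v = 0" and v: "v \<noteq> 0"
    using char_two_square_zero_eq_outer[OF two, of "u - mat 1"] u
    unfolding unipotent_type21_def by (metis eq_iff_diff_eq_0)
  then have "u = transvection v p"
    by (simp add: transvection_def algebra_simps)
  then have "z = transvection (g *v v) (p v* matrix_inv g)"
    using g by (simp add: zg conj_op_transvection)
  moreover have "dot (p v* matrix_inv g) (g *v v) = 0"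
    using g pv by (simp add: dot_conj)
  moreover have "g *v v \<noteq> 0"
    using v invertible_matrix_inv[OF g]
    by (metis matrix_vector_mul_assoc matrix_vector_mul_lid matrix_vector_mult_0_right)
  ultimately show thesis
    using that by blast
qed

section \<open>Products of two transvections have odd order\<close>

primrec matpow :: "'a::semiring_1^'n^'n \<Rightarrow> nat \<Rightarrow> 'a^'n^'n" where
  "matpow A 0 = mat 1"
| "matpow A (Suc n) = A ** matpow A n"

lemma matpow_add: "matpow A (m + n) = matpow A m ** matpow A n"
  by (induction m) (simp_all add: matrix_mul_assoc)

lemma matpow_commute: "matpow A n ** A = A ** matpow A n"
  by (induction n) (simp_all flip: matrix_mul_assoc)

lemma involution_conj_orbit:
  fixes x y :: "'a::field^'n^'n"
  assumes xx: "x ** x = mat 1" and yy: "y ** y = mat 1"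
    and ret: "matpow (x ** y) (2 * k) = x ** y"
    and "y \<in> R" and x_acts: "\<forall>z\<in>R. conj_op x z \<in> R" and y_acts: "\<forall>z\<in>R. conj_op y z \<in> R"
  shows "x \<in> R"
proof -
  let ?c = "x ** y"
  have cy: "?c ** y = x"
    by (simp add: yy flip: matrix_mul_assoc)
  have step: "conj_op x (conj_op y (matpow ?c (2 * j) ** y)) = matpow ?c (2 * Suc j) ** y" for j
  proof -
    let ?M = "matpow ?c (2 * j)"
    have "conj_op x (conj_op y (?M ** y)) = ?c ** (?M ** (y ** y)) ** x"
      by (simp add: conj_op_def matrix_inv_eq[OF xx] matrix_inv_eq[OF yy] matrix_mul_assoc)
    also have "\<dots> = ?c ** ((?M ** ?c) ** y)"
      by (simp add: yy cy flip: matrix_mul_assoc)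
    also have "\<dots> = ?c ** ((?c ** ?M) ** y)"
      by (simp only: matpow_commute)
    also have "\<dots> = matpow ?c (2 * Suc j) ** y"
      by (simp add: matrix_mul_assoc)
    finally show ?thesis .
  qed
  have "matpow ?c (2 * j) ** y \<in> R" for j
  proof (induction j)
    case 0
    then show ?case
      using \<open>y \<in> R\<close> by simp
  next
    case (Suc j)
    then show ?case
      using x_acts y_acts step by metis
  qed
  then show ?thesis
    using ret cy by metis
qed

definition mat_plus_outers ::
  "'a::comm_ring_1^'n \<Rightarrow> 'a^'n \<Rightarrow> 'a \<Rightarrow> 'a^'n \<Rightarrow> 'a^'n \<Rightarrow> 'a^'n^'n" where
  "mat_plus_outers v w c a b = mat c + outer v a + outer w b"

lemma mat_plus_outers_cong:
  "c = c' \<Longrightarrow> a = a' \<Longrightarrow> b = b' \<Longrightarrow> mat_plus_outers v w c a b = mat_plus_outers v w c' a' b'"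
  by simp

lemma mat_plus_outers_mult:
  fixes v w a b a' b' :: "'a::comm_ring_1^'n"
  shows "mat_plus_outers v w c a b ** mat_plus_outers v w d a' b' =
    mat_plus_outers v w (c * d) (c *s a' + d *s a + dot a v *s a' + dot a w *s b')
      (c *s b' + d *s b + dot b v *s a' + dot b w *s b')"
  unfolding mat_plus_outers_def matrix_add_ldistrib matrix_add_rdistrib
  by (simp only: outer_mult_outer matrix_mult_outer outer_mult_matrix mat_matrix_vector_mult
      vector_matrix_mult_mat mat_mult_mat outer_matrix_vector_mult)
     (simp add: vec_eq_iff algebra_simps)

definition square_coords :: "'a::field \<Rightarrow> 'a \<times> 'a \<times> 'a \<Rightarrow> 'a \<times> 'a \<times> 'a" where
  "square_coords \<sigma> = (\<lambda>(\<alpha>, \<beta>, \<gamma>). (\<alpha>\<^sup>2, \<sigma> * \<beta>\<^sup>2 + \<gamma>\<^sup>2, \<sigma> * \<gamma>\<^sup>2))"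

lemma inj_square_coords:
  fixes \<sigma> :: "'a::field"
  assumes two: "(2::'a) = 0" and "\<sigma> \<noteq> 0"
  shows "inj (square_coords \<sigma>)"
proof (rule injI)
  fix z z' :: "'a \<times> 'a \<times> 'a"
  obtain \<alpha> \<beta> \<gamma> \<alpha>' \<beta>' \<gamma>' where z: "z = (\<alpha>, \<beta>, \<gamma>)" "z' = (\<alpha>', \<beta>', \<gamma>')"
    by (cases z, cases z') auto
  assume "square_coords \<sigma> z = square_coords \<sigma> z'"
  then have "\<alpha>\<^sup>2 = \<alpha>'\<^sup>2" "\<sigma> * \<beta>\<^sup>2 + \<gamma>\<^sup>2 = \<sigma> * \<beta>'\<^sup>2 + \<gamma>'\<^sup>2" "\<sigma> * \<gamma>\<^sup>2 = \<sigma> * \<gamma>'\<^sup>2"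
    by (simp_all add: square_coords_def z)
  then have "\<alpha>\<^sup>2 = \<alpha>'\<^sup>2" "\<beta>\<^sup>2 = \<beta>'\<^sup>2" "\<gamma>\<^sup>2 = \<gamma>'\<^sup>2"
    using \<open>\<sigma> \<noteq> 0\<close> by simp_all
  then show "z = z'"
    using char_two_power2_inj[OF two] z by blast
qed

text \<open>
  With \<open>A = v p\<^sup>T\<close> and \<open>B = w q\<^sup>T\<close>, so that \<open>AB = (p w) v q\<^sup>T\<close> and
  \<open>BA = (q v) w p\<^sup>T\<close>, the matrix \<open>pair_alg_elem v p w q (\<alpha>, \<beta>, \<gamma>)\<close> is
  \<open>\<alpha> + \<beta> (AB + BA) + \<gamma> (A + B + AB)\<close>. If \<open>p v = q w = 0\<close> and \<open>\<sigma> = (p w)(q v)\<close>, then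
  \<open>K = A + B + AB\<close> and \<open>P = AB + BA\<close> satisfy \<open>K\<^sup>2 = \<sigma> K + P\<close>, \<open>KP = PK = \<sigma> K\<close> and
  \<open>P\<^sup>2 = \<sigma> P\<close>, so in characteristic 2 squaring acts on the coordinates by \<open>square_coords \<sigma>\<close>.
\<close>
definition pair_alg_elem ::
  "'a::field^'n \<Rightarrow> 'a^'n \<Rightarrow> 'a^'n \<Rightarrow> 'a^'n \<Rightarrow> 'a \<times> 'a \<times> 'a \<Rightarrow> 'a^'n^'n" where
  "pair_alg_elem v p w q = (\<lambda>(\<alpha>, \<beta>, \<gamma>).
     mat_plus_outers v w \<alpha> (\<gamma> *s p + (dot p w * (\<beta> + \<gamma>)) *s q) (\<gamma> *s q + (dot q v * \<beta>) *s p))"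

lemma pair_alg_elem_square:
  fixes v p w q :: "'a::field^'n"
  assumes two: "(2::'a) = 0" and "dot p v = 0" "dot q w = 0"
  shows "pair_alg_elem v p w q z ** pair_alg_elem v p w q z =
    pair_alg_elem v p w q (square_coords (dot p w * dot q v) z)"
  using assms
  by (auto simp: pair_alg_elem_def square_coords_def mat_plus_outers_mult dot_add_left
      dot_scale_left split: prod.split intro!: mat_plus_outers_cong)
     (simp_all add: vec_eq_iff algebra_simps power2_eq_square)

lemma transvection_mult_eq_pair_alg_elem:
  "transvection v p ** transvection w q = pair_alg_elem v p w q (1, 0, 1)"
proof -
  have "transvection v p = mat_plus_outers v w 1 p 0" "transvection w q = mat_plus_outers v w 1 0 q"
    by (simp_all add: transvection_def mat_plus_outers_def)
  then show ?thesis
    by (simp add: mat_plus_outers_mult pair_alg_elem_def)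
qed

lemma matpow_pair_alg_elem_power_two:
  fixes v p w q :: "'a::field^'n"
  assumes two: "(2::'a) = 0" and "dot p v = 0" "dot q w = 0"
  shows "matpow (pair_alg_elem v p w q z) (2 ^ n) =
    pair_alg_elem v p w q ((square_coords (dot p w * dot q v) ^^ n) z)"
proof (induction n)
  case (Suc n)
  have "matpow (pair_alg_elem v p w q z) (2 ^ Suc n) =
      matpow (pair_alg_elem v p w q z) (2 ^ n) ** matpow (pair_alg_elem v p w q z) (2 ^ n)"
    by (simp add: mult_2 matpow_add)
  then show ?case
    using Suc.IH pair_alg_elem_square[OF assms] by simp
qed simp

lemma transvection_product_power_return:
  fixes v p w q :: "'a::{field,finite}^'n"
  assumes two: "(2::'a) = 0" and iso: "dot p v = 0" "dot q w = 0"
    and "dot p w \<noteq> 0" "dot q v \<noteq> 0"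
  obtains k where "matpow (transvection v p ** transvection w q) (2 * k) =
    transvection v p ** transvection w q"
proof -
  have "inj (square_coords (dot p w * dot q v))"
    using assms by (simp add: inj_square_coords)
  then obtain n where "n > 0" and "(square_coords (dot p w * dot q v) ^^ n) (1, 0, 1) = (1, 0, 1)"
    by (rule funpow_inj_finite) simp
  then have "matpow (transvection v p ** transvection w q) (2 * 2 ^ (n - 1)) =
      transvection v p ** transvection w q"
    by (simp add: transvection_mult_eq_pair_alg_elem matpow_pair_alg_elem_power_two[OF two iso]
        flip: power_Suc)
  then show thesis
    by (rule that)
qed

lemma transvection_mem_if_acts:
  fixes v p w q :: "'a::{field,finite}^'n"
  assumes two: "(2::'a) = 0" and iso: "dot p v = 0" "dot q w = 0"
    and "dot p w \<noteq> 0" "dot q v \<noteq> 0"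
    and "transvection w q \<in> R"
    and "\<forall>z\<in>R. conj_op (transvection v p) z \<in> R" "\<forall>z\<in>R. conj_op (transvection w q) z \<in> R"
  shows "transvection v p \<in> R"
proof -
  obtain k where "matpow (transvection v p ** transvection w q) (2 * k) =
      transvection v p ** transvection w q"
    using transvection_product_power_return[OF assms(1-5)] .
  then show ?thesis
    using involution_conj_orbit transvection_involution[OF two] iso assms(6-8) by blast
qed

section \<open>No four transvections form a type F configuration\<close>

lemma triangular_pairing_common_kernel:
  fixes p1 p2 p3 v1 v2 v3 x :: "'a::field^3"
  assumes "dot p1 v1 \<noteq> 0" "dot p2 v2 \<noteq> 0" "dot p3 v3 \<noteq> 0"
    and "dot p2 v1 = 0" "dot p3 v1 = 0" "dot p3 v2 = 0"
    and "dot p1 x = 0" "dot p2 x = 0" "dot p3 x = 0"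
  shows "x = 0"
proof -
  define F :: "'a^3^3" where "F = vector [p1, p2, p3]"
  define W :: "'a^3^3" where "W = transpose (vector [v1, v2, v3])"
  have "det (F ** W) = dot p1 v1 * dot p2 v2 * dot p3 v3"
    using assms(4-6)
    by (simp add: F_def W_def det_3 matrix_matrix_mult_def transpose_def sum_3 dot_def)
  then have "invertible F"
    using assms(1-3) by (auto simp: invertible_det_nz det_mul)
  moreover have "F *v x = 0"
    using assms(7-9) by (simp add: F_def vec_eq_iff forall_3 matrix_vector_mult_def sum_3 dot_def)
  ultimately show ?thesis
    by (metis invertible_matrix_inv(2) matrix_vector_mul_assoc matrix_vector_mul_lid
        matrix_vector_mult_0_right)
qed

lemma tournament_walk:
  fixes R :: "nat \<Rightarrow> nat \<Rightarrow> bool"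
  assumes tot: "\<And>a b. a < 4 \<Longrightarrow> b < 4 \<Longrightarrow> a \<noteq> b \<Longrightarrow> R a b \<or> R b a"
  obtains x y z w where "x < 4" "y < 4" "z < 4" "w < 4" "R x y" "R y z" "R z w"
proof -
  have "R 0 1 \<or> R 1 0" "R 0 2 \<or> R 2 0" "R 1 2 \<or> R 2 1"
    using tot by simp_all
  then have "\<exists>x\<in>{0,1,2}. \<exists>y\<in>{0,1,2}. \<exists>z\<in>{0,1,2}. R x y \<and> R y z"
    by blast
  then obtain x y z where xyz: "x \<in> {0,1,2}" "y \<in> {0,1,2}" "z \<in> {0,1,2}" "R x y" "R y z"
    by blast
  then have "x < 3" "y < 3" "z < 3"
    by auto
  moreover have "R x 3 \<or> R 3 x" "R y 3 \<or> R 3 y" "R z 3 \<or> R 3 z"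
    using tot \<open>x < 3\<close> \<open>y < 3\<close> \<open>z < 3\<close> by simp_all
  ultimately have "\<exists>a\<in>{x,y,z,3}. \<exists>b\<in>{x,y,z,3}. \<exists>c\<in>{x,y,z,3}. \<exists>d\<in>{x,y,z,3}.
      R a b \<and> R b c \<and> R c d"
    using xyz(4,5) by blast
  moreover have "\<forall>a\<in>{x,y,z,3}. a < 4"
    using \<open>x < 3\<close> \<open>y < 3\<close> \<open>z < 3\<close> by auto
  ultimately show thesis
    using that by blast
qed

lemma no_acyclic_pairing_tournament:
  fixes V P :: "nat \<Rightarrow> 'a::field^3"
  assumes nonzero: "\<And>a. a < 4 \<Longrightarrow> V a \<noteq> 0"
    and iso: "\<And>a. a < 4 \<Longrightarrow> dot (P a) (V a) = 0"
    and one_way: "\<And>a b. a < 4 \<Longrightarrow> b < 4 \<Longrightarrow> dot (P a) (V b) * dot (P b) (V a) = 0"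
    and some_way: "\<And>a b. a < 4 \<Longrightarrow> b < 4 \<Longrightarrow> a \<noteq> b \<Longrightarrow>
      dot (P a) (V b) \<noteq> 0 \<or> dot (P b) (V a) \<noteq> 0"
    and no_cycle: "\<And>a b c. a < 4 \<Longrightarrow> b < 4 \<Longrightarrow> c < 4 \<Longrightarrow>
      dot (P a) (V b) \<noteq> 0 \<Longrightarrow> dot (P b) (V c) \<noteq> 0 \<Longrightarrow> dot (P c) (V a) = 0"
  shows False
proof -
  obtain x y z w where "x < 4" "y < 4" "z < 4" "w < 4"
    and xy: "dot (P x) (V y) \<noteq> 0" and yz: "dot (P y) (V z) \<noteq> 0" and zw: "dot (P z) (V w) \<noteq> 0"
    using tournament_walk[of "\<lambda>a b. dot (P a) (V b) \<noteq> 0"] some_way by blast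
  then have "dot (P y) (V x) = 0" "dot (P z) (V y) = 0" "dot (P z) (V x) = 0"
    using one_way[of x y] one_way[of y z] no_cycle[of x y z] by auto
  then have "V x = 0"
    using triangular_pairing_common_kernel[OF xy yz zw] iso \<open>x < 4\<close> \<open>y < 4\<close> \<open>z < 4\<close> by blast
  then show False
    using nonzero \<open>x < 4\<close> by blast
qed

lemma transvection_pair_dot_zero:
  fixes v p w q :: "'a::{field,finite}^'n"
  assumes two: "(2::'a) = 0"
    and subrack: "\<forall>x\<in>Rb. \<forall>y\<in>Rb. conj_op x y \<in> Rb" and "Ra \<inter> Rb = {}"
    and acts: "\<forall>x\<in>Ra. \<forall>y\<in>Rb. conj_op x y \<in> Rb"
    and "transvection v p \<in> Ra" "transvection w q \<in> Rb" "dot p v = 0" "dot q w = 0"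
  shows "dot p w * dot q v = 0"
proof (rule ccontr)
  assume "dot p w * dot q v \<noteq> 0"
  moreover have "\<forall>z\<in>Rb. conj_op (transvection v p) z \<in> Rb" "\<forall>z\<in>Rb. conj_op (transvection w q) z \<in> Rb"
    using acts subrack assms(5,6) by blast+
  ultimately have "transvection v p \<in> Rb"
    using transvection_mem_if_acts[OF two assms(7,8)] assms(6) by simp
  then show False
    using assms by blast
qed

lemma transvection_pairing_no_cycle:
  fixes va pa vb pb vc pc :: "'a::{field,finite}^'n"
  assumes two: "(2::'a) = 0"
    and subrack: "\<forall>x\<in>Rc. \<forall>y\<in>Rc. conj_op x y \<in> Rc" and disjoint: "Rb \<inter> Rc = {}"
    and acts: "\<forall>x\<in>Ra. \<forall>y\<in>Rb. conj_op x y \<in> Rb" "\<forall>x\<in>Rb. \<forall>y\<in>Rc. conj_op x y \<in> Rc"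
    and mem: "transvection va pa \<in> Ra" "transvection vb pb \<in> Rb" "transvection vc pc \<in> Rc"
    and iso: "dot pa va = 0" "dot pb vb = 0" "dot pc vc = 0"
    and ab: "dot pa vb \<noteq> 0" and bc: "dot pb vc \<noteq> 0" and "dot pb va = 0" "dot pc vb = 0"
  shows "dot pc va = 0"
proof -
  let ?v = "vb + dot pa vb *s va"
  have "conj_op (transvection va pa) (transvection vb pb) = transvection ?v pb" "dot pb ?v = 0"
    using assms by (simp_all add: conj_op_transvection_transvection dot_add_right dot_scale_right)
  moreover have "conj_op (transvection va pa) (transvection vb pb) \<in> Rb"
    using acts(1) mem(1,2) by blast
  ultimately have "dot pb vc * dot pc ?v = 0"
    using transvection_pair_dot_zero[OF two subrack disjoint acts(2)] mem(3) iso(3) by simp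
  then show ?thesis
    using ab bc \<open>dot pc vb = 0\<close> by (simp add: dot_add_right dot_scale_right)
qed

lemma isotropic_transvection_rack_not_type_F:
  fixes X :: "('a::{field,finite}^3^3) set"
  assumes two: "(2::'a) = 0"
    and X: "\<And>x. x \<in> X \<Longrightarrow> \<exists>v p. x = transvection v p \<and> dot p v = 0 \<and> v \<noteq> 0"
  shows "\<not> rack_type_F X conj_op"
proof
  assume "rack_type_F X conj_op"
  then obtain R r where
      sub: "\<forall>a<(4::nat). is_subrack X conj_op (R a) \<and> r a \<in> R a"
      and F: "\<forall>a<(4::nat). \<forall>b<4. a \<noteq> b \<longrightarrow> R a \<inter> R b = {} \<and>
        {conj_op x y | x y. x \<in> R a \<and> y \<in> R b} = R b \<and> conj_op (r a) (r b) \<noteq> r b"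
    unfolding rack_type_F_def by blast
  have subrack: "\<forall>x\<in>R a. \<forall>y\<in>R a. conj_op x y \<in> R a" and rX: "r a \<in> X" and rR: "r a \<in> R a"
    if "a < 4" for a
    using sub that unfolding is_subrack_def by blast+
  have disjoint: "R a \<inter> R b = {}" and acts: "\<forall>x\<in>R a. \<forall>y\<in>R b. conj_op x y \<in> R b"
    and noncomm: "conj_op (r a) (r b) \<noteq> r b"
    if "a < 4" "b < 4" "a \<noteq> b" for a b
    using F that by blast+
  obtain V P where r: "\<And>a. a < 4 \<Longrightarrow> r a = transvection (V a) (P a)"
    and iso: "\<And>a. a < 4 \<Longrightarrow> dot (P a) (V a) = 0" and nonzero: "\<And>a. a < 4 \<Longrightarrow> V a \<noteq> 0"
  proof -
    have "\<exists>vp. r a = transvection (fst vp) (snd vp) \<and> dot (snd vp) (fst vp) = 0 \<and> fst vp \<noteq> 0"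
      if "a \<in> {..<4}" for a
      using X[OF rX] that by force
    then obtain VP where "\<forall>a\<in>{..<4}.
        r a = transvection (fst (VP a)) (snd (VP a)) \<and> dot (snd (VP a)) (fst (VP a)) = 0 \<and> fst (VP a) \<noteq> 0"
      by (metis bchoice)
    then show thesis
      by (intro that[of "fst \<circ> VP" "snd \<circ> VP"]) auto
  qed
  have one_way: "dot (P a) (V b) * dot (P b) (V a) = 0" if "a < 4" "b < 4" for a b
  proof (cases "a = b")
    case False
    then show ?thesis
      using transvection_pair_dot_zero[OF two subrack[OF that(2)] disjoint[OF that False]
          acts[OF that False]] rR r iso that
      by simp
  qed (use iso that in simp)
  show False
  proof (rule no_acyclic_pairing_tournament[OF nonzero iso one_way])
    fix a b :: nat assume ab: "a < 4" "b < 4" "a \<noteq> b"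
    show "dot (P a) (V b) \<noteq> 0 \<or> dot (P b) (V a) \<noteq> 0"
      using noncomm[OF ab] r[OF ab(1)] r[OF ab(2)] iso[OF ab(1)]
      by (auto simp: conj_op_transvection_transvection)
  next
    fix a b c :: nat assume abc: "a < 4" "b < 4" "c < 4"
      and ab: "dot (P a) (V b) \<noteq> 0" and bc: "dot (P b) (V c) \<noteq> 0"
    have "a \<noteq> b" "b \<noteq> c"
      using ab bc iso abc by auto
    then show "dot (P c) (V a) = 0"
      using transvection_pairing_no_cycle[OF two subrack[OF abc(3)] disjoint[OF abc(2,3)]
          acts[OF abc(1,2)] acts[OF abc(2,3)], of "V a" "P a" "V b" "P b" "V c" "P c"]
        rR r iso abc ab bc one_way[of a b] one_way[of b c]
      by simp
  qed
qed


theorem mainTheorem17: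
  fixes u :: "'a::{field,finite}^3^3"
  assumes "even CARD('a)"
    and "det u = 1"
    and "unipotent_type21 u"
  shows "\<not> rack_type_F (SL_conj_class u) conj_op"
proof -
  have two: "(2::'a) = 0"
    using assms(1) by (rule even_card_imp_two_eq_zero)
  show ?thesis
    by (rule isotropic_transvection_rack_not_type_F[OF two])
      (metis SL_conj_class_transvection[OF two assms(3)])
qed

end
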